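(* Let $y\in\mathbb{R}$, $\beta>0$, and let $f$ be a function that is ordinal decreasing on $D=(y,y+\beta)$ and satisfies $f(x)>0$ for all $x\in D$. Then there exists $\varepsilon$ with $0<\varepsilon<\beta$ such that $x-f(x)<y$ for every $x$ with $y<x<y+\varepsilon$.
   Context: For $h:D\to\mathbb{R}$, a strictly decreasing sequence $x_1>x_2>\cdots$ in $D$ is $h$-bad if $h(x_1)>h(x_2)>\cdots$; $h$ is ordinal decreasing on $D$ if there is no infinite $h$-bad sequence in $D$. *)

theory Defs
  imports Main "HOL.Real"
begin

definition bad_seq :: "(real \<Rightarrow> real) \<Rightarrow> real set \<Rightarrow> (nat \<Rightarrow> real) \<Rightarrow> bool" where
  "bad_seq h D s \<longleftrightarrow> (\<forall>n. s n \<in> D) \<and> (\<forall>n. s (Suc n) < s n) \<and> (\<forall>n. h (s (Suc n)) < h (s n))"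

definition ordinal_decreasing :: "(real \<Rightarrow> real) \<Rightarrow> real set \<Rightarrow> bool" where
  "ordinal_decreasing h D \<longleftrightarrow> \<not> (\<exists>s. bad_seq h D s)"

end

theory Submission
  imports Defs
begin

text \<open>If x - f x \<ge> y held at points arbitrarily close to y, take such a point x minimal for the
  order "smaller and with smaller f-value", which exists since f is ordinal decreasing. Any other
  such point x' < y + f x then has x' < x and f x' \<le> x' - y < f x, contradicting minimality.\<close>

lemma ordinal_decreasing_has_minimal:
  assumes "ordinal_decreasing h D" and "S \<subseteq> D" and "S \<noteq> {}"
  shows "\<exists>x\<in>S. \<forall>x'\<in>S. \<not> (x' < x \<and> h x' < h x)"
proof (rule ccontr)
  assume no_minimal: "\<not> ?thesis"
  from \<open>S \<noteq> {}\<close> have "\<exists>x. x \<in> S" by blast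
  moreover have "\<exists>x'. x' \<in> S \<and> x' < x \<and> h x' < h x" if "x \<in> S" for x
    using no_minimal that by blast
  ultimately obtain s where "\<forall>n. s n \<in> S \<and> s (Suc n) < s n \<and> h (s (Suc n)) < h (s n)"
    using dependent_nat_choice[of "\<lambda>_ x. x \<in> S" "\<lambda>_ x x'. x' < x \<and> h x' < h x"] by blast
  with \<open>S \<subseteq> D\<close> have "bad_seq h D s"
    unfolding bad_seq_def by blast
  with assms(1) show False
    unfolding ordinal_decreasing_def by blast
qed

theorem lemma5:
  fixes f :: "real \<Rightarrow> real" and y \<beta> :: real
  assumes "\<beta> > 0"
    and "ordinal_decreasing f {y<..<y + \<beta>}"
    and "\<forall>x \<in> {y<..<y + \<beta>}. f x > 0"
  shows "\<exists>\<epsilon>. 0 < \<epsilon> \<and> \<epsilon> < \<beta> \<and> (\<forall>x. y < x \<and> x < y + \<epsilon> \<longrightarrow> x - f x < y)"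
proof (rule ccontr)
  assume no_eps: "\<not> ?thesis"
  have near_y: "\<exists>x. y < x \<and> x < y + \<epsilon> \<and> f x \<le> x - y" if "0 < \<epsilon>" "\<epsilon> < \<beta>" for \<epsilon>
  proof -
    from no_eps that obtain x where "y < x" "x < y + \<epsilon>" "\<not> x - f x < y"
      by blast
    then show ?thesis by auto
  qed
  define S where "S = {x \<in> {y<..<y + \<beta>}. f x \<le> x - y}"
  have "S \<subseteq> {y<..<y + \<beta>}"
    unfolding S_def by blast
  moreover have "S \<noteq> {}"
  proof -
    obtain x where "y < x" "x < y + \<beta> / 2" "f x \<le> x - y"
      using near_y[of "\<beta> / 2"] \<open>\<beta> > 0\<close> by auto
    then have "x \<in> S"
      using \<open>\<beta> > 0\<close> unfolding S_def by auto
    then show ?thesis by blast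
  qed
  ultimately obtain x where "x \<in> S" and minimal: "\<forall>x'\<in>S. \<not> (x' < x \<and> f x' < f x)"
    using ordinal_decreasing_has_minimal[OF assms(2)] by blast
  have "0 < f x" "f x \<le> x - y"
    using \<open>x \<in> S\<close> assms(3) unfolding S_def by auto
  have "0 < min (f x) (\<beta> / 2)" "min (f x) (\<beta> / 2) < \<beta>"
    using \<open>0 < f x\<close> \<open>\<beta> > 0\<close> by auto
  then obtain x' where "y < x'" "x' < y + min (f x) (\<beta> / 2)" "f x' \<le> x' - y"
    using near_y by blast
  then have "x' \<in> S" "x' < x" "f x' < f x"
    using \<open>f x \<le> x - y\<close> unfolding S_def by auto
  with minimal show False by blast
qed

end
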